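(* Let $n,g,k$ be integers with $k\ge1$ and $2\leq g\leq \left\lfloor \frac{n-k-2}{2}\right\rfloor$, and suppose $(n-k)g$ is odd. Let $a,b$ be integers with $a$ even, $b$ odd, $a\geq g+1$, $b\geq g+1$, $a+b=n-k$. Let $H_1$ be a connected $g$-regular graph of order $a$, and $H_2$ a connected graph of order $b$ in which one vertex has degree exactly $g+1$ and every other vertex has degree exactly $g$. Let $K_{1,k-1}$ be a star with center $v$, and let $H^k_n$ be a graph obtained from the disjoint union of $H_1$, $H_2$ and $K_{1,k-1}$ by adding exactly one edge from $v$ to $H_1$ and exactly one edge from $v$ to $H_2$. Then $\kappa^g(H^k_n)=k$.
   Context: For a connected graph $G=(V,E)$ and integer $g\ge0$: a set $F\subseteq V$ is a $g$-good-neighbor faulty set if $|N(v)\cap (V-F)|\geq g$ for every $v\in V-F$; a $g$-good-neighbor cut is such an $F$ with $G-F$ disconnected; $\kappa^g(G)$ is the minimum cardinality of a $g$-good-neighbor cut. *)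

theory Defs
  imports Main
begin

definition sgraph :: "'a set \<Rightarrow> ('a \<Rightarrow> 'a \<Rightarrow> bool) \<Rightarrow> bool" where
  "sgraph V E \<longleftrightarrow> finite V \<and> (\<forall>x y. E x y \<longrightarrow> x \<in> V \<and> y \<in> V)
     \<and> (\<forall>x y. E x y \<longrightarrow> E y x) \<and> (\<forall>x. \<not> E x x)"

definition induce :: "('a \<Rightarrow> 'a \<Rightarrow> bool) \<Rightarrow> 'a set \<Rightarrow> 'a \<Rightarrow> 'a \<Rightarrow> bool" where
  "induce E W = (\<lambda>x y. x \<in> W \<and> y \<in> W \<and> E x y)"

definition nbrs :: "'a set \<Rightarrow> ('a \<Rightarrow> 'a \<Rightarrow> bool) \<Rightarrow> 'a \<Rightarrow> 'a set" where
  "nbrs V E x = {y \<in> V. E x y}"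

definition deg :: "'a set \<Rightarrow> ('a \<Rightarrow> 'a \<Rightarrow> bool) \<Rightarrow> 'a \<Rightarrow> nat" where
  "deg V E x = card (nbrs V E x)"

definition reachable :: "'a set \<Rightarrow> ('a \<Rightarrow> 'a \<Rightarrow> bool) \<Rightarrow> 'a \<Rightarrow> 'a \<Rightarrow> bool" where
  "reachable V E x y \<longleftrightarrow> (\<lambda>u w. u \<in> V \<and> w \<in> V \<and> E u w)\<^sup>*\<^sup>* x y"

definition connected_graph :: "'a set \<Rightarrow> ('a \<Rightarrow> 'a \<Rightarrow> bool) \<Rightarrow> bool" where
  "connected_graph V E \<longleftrightarrow> V \<noteq> {} \<and> (\<forall>x\<in>V. \<forall>y\<in>V. reachable V E x y)"

definition disconnected_graph :: "'a set \<Rightarrow> ('a \<Rightarrow> 'a \<Rightarrow> bool) \<Rightarrow> bool" where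
  "disconnected_graph V E \<longleftrightarrow> (\<exists>x\<in>V. \<exists>y\<in>V. \<not> reachable V E x y)"

definition good_neighbor_faulty :: "'a set \<Rightarrow> ('a \<Rightarrow> 'a \<Rightarrow> bool) \<Rightarrow> nat \<Rightarrow> 'a set \<Rightarrow> bool" where
  "good_neighbor_faulty V E g F \<longleftrightarrow> F \<subseteq> V \<and>
     (\<forall>v \<in> V - F. card (nbrs V E v \<inter> (V - F)) \<ge> g)"

definition good_neighbor_cut :: "'a set \<Rightarrow> ('a \<Rightarrow> 'a \<Rightarrow> bool) \<Rightarrow> nat \<Rightarrow> 'a set \<Rightarrow> bool" where
  "good_neighbor_cut V E g F \<longleftrightarrow> good_neighbor_faulty V E g F \<and>
     disconnected_graph (V - F) (induce E (V - F))"

definition kappa_g :: "'a set \<Rightarrow> ('a \<Rightarrow> 'a \<Rightarrow> bool) \<Rightarrow> nat \<Rightarrow> nat" where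
  "kappa_g V E g = Inf {card F | F. good_neighbor_cut V E g F}"

end

theory Submission
  imports Defs
begin

text \<open>The leaves of the star have degree 1 < g, so every g-good-neighbor faulty set contains
  all k - 1 of them. Removing only the leaves leaves H1, v and H2 connected through v, so a
  g-good-neighbor cut has at least k vertices. Conversely the whole star is a g-good-neighbor
  cut of size k: it separates H1 from H2, whose vertices all keep degree at least g.
  Only connectivity and minimum degree g of H1 and H2 matter; the order and parity
  hypotheses merely ensure that such graphs exist.\<close>

lemma reachable_sym:
  assumes "symp E" "reachable V E x y"
  shows "reachable V E y x"
proof -
  have "symp (\<lambda>u w. u \<in> V \<and> w \<in> V \<and> E u w)"
    using assms(1) by (auto simp: symp_def)
  then show ?thesis
    using assms(2) unfolding reachable_def by (blast dest: symp_rtranclp[THEN sympD])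
qed

lemma reachable_induce_mono:
  assumes "reachable A (induce E A) x y" "A \<subseteq> B"
  shows "reachable B (induce E B) x y"
  using assms unfolding reachable_def induce_def
  by (rule_tac rtranclp_mono[THEN predicate2D, rotated]) auto

lemma reachable_induce_closed:
  assumes "reachable W (induce E W) x y" "x \<in> A"
    and closed: "\<And>u w. u \<in> A \<Longrightarrow> w \<in> W \<Longrightarrow> E u w \<Longrightarrow> w \<in> A"
  shows "y \<in> A"
  using assms(1,2) unfolding reachable_def
proof induction
  case (step y z)
  then show ?case using closed unfolding induce_def by blast
qed

lemma reachable_through_connected_part:
  assumes "connected_graph A (induce E A)" "A \<subseteq> W" "x \<in> A" "u \<in> A" "c \<in> W" "E u c"
  shows "reachable W (induce E W) x c"
proof -
  have "reachable A (induce E A) x u"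
    using assms(1,3,4) unfolding connected_graph_def by blast
  then have "reachable W (induce E W) x u"
    using assms(2) by (rule reachable_induce_mono)
  moreover have "u \<in> W" using assms(2,4) by blast
  ultimately show ?thesis
    using assms(5,6) unfolding reachable_def induce_def by (simp add: rtranclp.rtrancl_into_rtrancl)
qed

lemma not_disconnected_if_reachable_hub:
  assumes "symp E" "\<And>x. x \<in> W \<Longrightarrow> reachable W (induce E W) x c"
  shows "\<not> disconnected_graph W (induce E W)"
proof -
  have "symp (induce E W)"
    using assms(1) by (auto simp: symp_def induce_def)
  have "reachable W (induce E W) x y" if "x \<in> W" "y \<in> W" for x y
    using assms(2)[OF that(1)] reachable_sym[OF \<open>symp (induce E W)\<close> assms(2)[OF that(2)]]
    unfolding reachable_def by simp
  then show ?thesis unfolding disconnected_graph_def by blast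
qed

lemma nbrs_induce:
  assumes "W \<subseteq> V" "x \<in> W"
  shows "nbrs W (induce E W) x = nbrs V E x \<inter> W"
  using assms unfolding nbrs_def induce_def by blast

lemma deg_induce_mono:
  assumes "finite B" "A \<subseteq> B" "x \<in> A"
  shows "deg A (induce E A) x \<le> deg B (induce E B) x"
  unfolding deg_def using assms
  by (intro card_mono) (auto simp: nbrs_def induce_def)

lemma good_neighbor_faulty_iff_min_deg:
  "good_neighbor_faulty V E g F \<longleftrightarrow>
     F \<subseteq> V \<and> (\<forall>x \<in> V - F. g \<le> deg (V - F) (induce E (V - F)) x)"
proof -
  have "nbrs (V - F) (induce E (V - F)) x = nbrs V E x \<inter> (V - F)" if "x \<in> V - F" for x
    using that by (intro nbrs_induce) auto
  then show ?thesis unfolding good_neighbor_faulty_def deg_def by auto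
qed

lemma good_neighbor_faulty_low_deg:
  assumes "finite V" "good_neighbor_faulty V E g F" "x \<in> V" "deg V E x < g"
  shows "x \<in> F"
proof (rule ccontr)
  assume "x \<notin> F"
  then have "g \<le> card (nbrs V E x \<inter> (V - F))"
    using assms(2,3) unfolding good_neighbor_faulty_def by blast
  also have "\<dots> \<le> deg V E x"
    unfolding deg_def nbrs_def using assms(1) by (intro card_mono) auto
  finally show False using assms(4) by simp
qed

lemma kappa_g_eqI:
  assumes "good_neighbor_cut V E g S" "\<And>F. good_neighbor_cut V E g F \<Longrightarrow> card S \<le> card F"
  shows "kappa_g V E g = card S"
  unfolding kappa_g_def by (rule cInf_eq_minimum) (use assms in auto)

locale star_bridged_graph =
  fixes V V1 V2 S :: "'a set" and E :: "'a \<Rightarrow> 'a \<Rightarrow> bool" and v u1 u2 :: 'a and g :: nat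
  assumes graph: "sgraph V E"
    and g: "2 \<le> g"
    and parts: "V = V1 \<union> V2 \<union> S" "V1 \<inter> V2 = {}" "V1 \<inter> S = {}" "V2 \<inter> S = {}"
    and connected1: "connected_graph V1 (induce E V1)"
    and connected2: "connected_graph V2 (induce E V2)"
    and min_deg1: "\<forall>x\<in>V1. g \<le> deg V1 (induce E V1) x"
    and min_deg2: "\<forall>x\<in>V2. g \<le> deg V2 (induce E V2) x"
    and star: "v \<in> S" "\<forall>x\<in>S. \<forall>y\<in>S. E x y \<longrightarrow> x = v \<or> y = v"
    and links: "u1 \<in> V1" "u2 \<in> V2" "E v u1" "E v u2"
    and only1: "\<forall>x y. E x y \<and> x \<in> V1 \<and> y \<notin> V1 \<longrightarrow> x = u1 \<and> y = v"
    and only2: "\<forall>x y. E x y \<and> x \<in> V2 \<and> y \<notin> V2 \<longrightarrow> x = u2 \<and> y = v"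
begin

lemma finite_V: "finite V"
  and symp_E: "symp E"
  using graph unfolding sgraph_def symp_def by blast+

lemma finite_S: "finite S"
  using finite_V parts(1) by (auto intro: finite_subset)

lemma leaf_nbrs:
  assumes "x \<in> S - {v}"
  shows "nbrs V E x \<subseteq> {v}"
proof
  fix y assume "y \<in> nbrs V E x"
  then have "E x y" "E y x" "y \<in> V"
    using symp_E unfolding nbrs_def by (auto dest: sympD)
  with assms have "y \<in> S" using only1 only2 parts by blast
  then show "y \<in> {v}" using star(2) \<open>E x y\<close> assms by blast
qed

lemma leaves_subset_faulty:
  assumes "good_neighbor_faulty V E g F"
  shows "S - {v} \<subseteq> F"
proof
  fix x assume x: "x \<in> S - {v}"
  have "deg V E x \<le> card {v}"
    unfolding deg_def by (rule card_mono) (use leaf_nbrs[OF x] in auto)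
  then have "deg V E x < g" using g by simp
  then show "x \<in> F"
    using good_neighbor_faulty_low_deg[OF finite_V assms] x parts(1) by blast
qed

lemma star_good_neighbor_cut: "good_neighbor_cut V E g S"
proof -
  have VS: "V - S = V1 \<union> V2" using parts by blast
  have "finite (V - S)" using finite_V by blast
  have "g \<le> deg (V - S) (induce E (V - S)) x" if "x \<in> V - S" for x
  proof -
    from that VS consider "x \<in> V1" | "x \<in> V2" by blast
    then show ?thesis
    proof cases
      case 1
      then have "g \<le> deg V1 (induce E V1) x" using min_deg1 by blast
      also have "\<dots> \<le> deg (V - S) (induce E (V - S)) x"
        using \<open>finite (V - S)\<close> 1 VS by (intro deg_induce_mono) auto
      finally show ?thesis .
    next
      case 2
      then have "g \<le> deg V2 (induce E V2) x" using min_deg2 by blast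
      also have "\<dots> \<le> deg (V - S) (induce E (V - S)) x"
        using \<open>finite (V - S)\<close> 2 VS by (intro deg_induce_mono) auto
      finally show ?thesis .
    qed
  qed
  then have "good_neighbor_faulty V E g S"
    unfolding good_neighbor_faulty_iff_min_deg using parts(1) by blast
  moreover have "\<not> reachable (V - S) (induce E (V - S)) u1 u2"
  proof
    assume "reachable (V - S) (induce E (V - S)) u1 u2"
    then have "u2 \<in> V1"
      by (rule reachable_induce_closed) (use links(1) only1 star(1) in blast)+
    then show False using links(2) parts(2) by blast
  qed
  ultimately show ?thesis
    unfolding good_neighbor_cut_def disconnected_graph_def using links(1,2) VS by blast
qed

lemma connected_without_leaves:
  "\<not> disconnected_graph (V - (S - {v})) (induce E (V - (S - {v})))"
proof (rule not_disconnected_if_reachable_hub[OF symp_E])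
  let ?W = "V - (S - {v})"
  have W: "?W = V1 \<union> V2 \<union> {v}" using parts star(1) by blast
  fix x assume "x \<in> ?W"
  then consider "x \<in> V1" | "x \<in> V2" | "x = v" using W by blast
  then show "reachable ?W (induce E ?W) x v"
  proof cases
    case 1
    have "E u1 v" using links(3) symp_E by (blast dest: sympD)
    show ?thesis
      by (rule reachable_through_connected_part[OF connected1 _ 1 links(1) _ \<open>E u1 v\<close>])
        (use W in auto)
  next
    case 2
    have "E u2 v" using links(4) symp_E by (blast dest: sympD)
    show ?thesis
      by (rule reachable_through_connected_part[OF connected2 _ 2 links(2) _ \<open>E u2 v\<close>])
        (use W in auto)
  qed (simp add: reachable_def)
qed

lemma card_good_neighbor_cut_ge:
  assumes "good_neighbor_cut V E g F"
  shows "card S \<le> card F"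
proof (rule ccontr)
  assume "\<not> card S \<le> card F"
  have faulty: "good_neighbor_faulty V E g F"
    using assms unfolding good_neighbor_cut_def by blast
  then have "finite F"
    using finite_V unfolding good_neighbor_faulty_def by (blast intro: finite_subset)
  moreover have leaves: "S - {v} \<subseteq> F" by (rule leaves_subset_faulty[OF faulty])
  moreover have "card F \<le> card (S - {v})"
    using \<open>\<not> card S \<le> card F\<close> star(1) finite_S by simp
  ultimately have "F = S - {v}" by (metis card_seteq)
  then show False
    using assms connected_without_leaves unfolding good_neighbor_cut_def by simp
qed

lemma kappa_g_eq_card_star: "kappa_g V E g = card S"
  by (rule kappa_g_eqI[OF star_good_neighbor_cut card_good_neighbor_cut_ge])

end

theorem lemma4p2:
  fixes V V1 V2 S :: "'a set" and E :: "'a \<Rightarrow> 'a \<Rightarrow> bool"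
    and n g k a b :: nat and v u1 u2 w :: 'a
  assumes graph: "sgraph V E"
    and k: "k \<ge> 1"
    and g: "2 \<le> g" "g \<le> (n - k - 2) div 2"
    and odd_prod: "odd ((n - k) * g)"
    and ab: "even a" "odd b" "a \<ge> g + 1" "b \<ge> g + 1" "a + b = n - k"
    and parts: "V = V1 \<union> V2 \<union> S" "V1 \<inter> V2 = {}" "V1 \<inter> S = {}" "V2 \<inter> S = {}"
    and H1: "card V1 = a" "connected_graph V1 (induce E V1)"
            "\<forall>x\<in>V1. deg V1 (induce E V1) x = g"
    and H2: "card V2 = b" "connected_graph V2 (induce E V2)"
            "w \<in> V2" "deg V2 (induce E V2) w = g + 1"
            "\<forall>x\<in>V2 - {w}. deg V2 (induce E V2) x = g"
    and star: "card S = k" "v \<in> S" "\<forall>x\<in>S - {v}. E v x"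
              "\<forall>x\<in>S. \<forall>y\<in>S. E x y \<longrightarrow> x = v \<or> y = v"
    and links: "u1 \<in> V1" "u2 \<in> V2" "E v u1" "E v u2"
    and only1: "\<forall>x y. E x y \<and> x \<in> V1 \<and> y \<notin> V1 \<longrightarrow> x = u1 \<and> y = v"
    and only2: "\<forall>x y. E x y \<and> x \<in> V2 \<and> y \<notin> V2 \<longrightarrow> x = u2 \<and> y = v"
  shows "kappa_g V E g = k"
proof -
  have "\<forall>x\<in>V2. g \<le> deg V2 (induce E V2) x"
    using H2(4,5) by (metis Diff_iff empty_iff insert_iff le_add1 order_refl)
  then interpret star_bridged_graph V V1 V2 S E v u1 u2 g
    using graph g(1) parts H1(2,3) H2(2) star(2,4) links only1 only2
    by unfold_locales auto
  show ?thesis using kappa_g_eq_card_star \<open>card S = k\<close> by simp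
qed

end
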